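(* Let $f$ be smooth and bistable (there is $\alpha\in(0,1)$ with $f(0)=f(\alpha)=f(1)=0$, $f'(0),f'(1)<0<f'(\alpha)$, $f>0$ on $(-\infty,0)\cup(\alpha,1)$, $f<0$ on $(0,\alpha)\cup(1,\infty)$), $\tau_m=1/\sup_{[0,1]}|f'|$, $\delta_+=-f'(1)$, $\delta_-=-f'(0)$, $\chi_0=\tfrac12\min\{\delta_+,\delta_-\}$, and $\Omega=\{\lambda\in\mathbb{C}:\mathrm{Re}\,\lambda>-\chi_0\}$. For $\tau\in(0,\tau_m)$ let $c=c_\ast(\tau)$ be the speed of the traveling wave of $u_t=v_x+f(u)$, $\tau v_t=u_x-v$ connecting $(0,0)$ to $(1,0)$, $b_\pm=1+\tau\delta_\pm$, and $$\mathbf{A}^\tau_\pm(\lambda)=(1-c^2\tau)^{-1}\begin{pmatrix}0&1-c^2\tau\\ \tau\lambda^2+\lambda b_\pm+\delta_\pm& -c(b_\pm+2\tau\lambda)\end{pmatrix}.$$ Then for all $\tau\in(0,\tau_m)$ and all $\lambda\in\Omega$, the matrices $\mathbf{A}^\tau_\pm(\lambda)$ have no eigenvalues on the imaginary axis (no center eigenspace), and their stable and unstable eigenspaces $\mathbb{S}^\tau_\pm(\lambda)$, $\mathbb{U}^\tau_\pm(\lambda)$ satisfy $\dim\mathbb{S}^\tau_\pm(\lambda)=\dim\mathbb{U}^\tau_\pm(\lambda)=1$.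
   Context: It is known that $c_\ast(\tau)^2\tau<1$. The matrices $\mathbf{A}^\tau_\pm(\lambda)$ are the limits as $x\to\pm\infty$ of the coefficient matrix of the first-order form of the linearized eigenvalue problem around the wave. *)

theory Defs
  imports "HOL-Analysis.Analysis"
begin

definition smooth_fun :: "(real \<Rightarrow> real) \<Rightarrow> bool" where
  "smooth_fun f \<longleftrightarrow> (\<forall>n x. ((deriv ^^ n) f) differentiable (at x))"

definition bistable :: "(real \<Rightarrow> real) \<Rightarrow> bool" where
  "bistable f \<longleftrightarrow> (\<exists>\<alpha>. 0 < \<alpha> \<and> \<alpha> < 1 \<and> f 0 = 0 \<and> f \<alpha> = 0 \<and> f 1 = 0 \<and>
     deriv f 0 < 0 \<and> deriv f 1 < 0 \<and> 0 < deriv f \<alpha> \<and>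
     (\<forall>u. (u < 0 \<or> (\<alpha> < u \<and> u < 1)) \<longrightarrow> f u > 0) \<and>
     (\<forall>u. ((0 < u \<and> u < \<alpha>) \<or> 1 < u) \<longrightarrow> f u < 0))"

definition tau_m :: "(real \<Rightarrow> real) \<Rightarrow> real" where
  "tau_m f = 1 / (SUP x\<in>{0..1}. \<bar>deriv f x\<bar>)"

definition chi0 :: "(real \<Rightarrow> real) \<Rightarrow> real" where
  "chi0 f = min (- deriv f 1) (- deriv f 0) / 2"

text \<open>Traveling wave (u,v)(x,t) = (U,V)(x - c t) of u_t = v_x + f(u), tau v_t = u_x - v,
  with (U,V) -> (0,0) as xi -> -infinity and (U,V) -> (1,0) as xi -> +infinity.\<close>
definition traveling_wave ::
  "(real \<Rightarrow> real) \<Rightarrow> real \<Rightarrow> real \<Rightarrow> (real \<Rightarrow> real) \<Rightarrow> (real \<Rightarrow> real) \<Rightarrow> bool" where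
  "traveling_wave f \<tau> c U V \<longleftrightarrow>
     (\<forall>\<xi>. U differentiable (at \<xi>) \<and> V differentiable (at \<xi>) \<and>
          - c * deriv U \<xi> = deriv V \<xi> + f (U \<xi>) \<and>
          - \<tau> * c * deriv V \<xi> = deriv U \<xi> - V \<xi>) \<and>
     (U \<longlongrightarrow> 0) at_bot \<and> (V \<longlongrightarrow> 0) at_bot \<and>
     (U \<longlongrightarrow> 1) at_top \<and> (V \<longlongrightarrow> 0) at_top"

definition A_mat :: "real \<Rightarrow> real \<Rightarrow> real \<Rightarrow> complex \<Rightarrow> complex^2^2" where
  "A_mat \<tau> c \<delta> lam =
     (let t = complex_of_real \<tau>; cc = complex_of_real c; d = complex_of_real \<delta>;
          b = 1 + t * d; k = 1 / (1 - cc^2 * t) in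
      vector [vector [0, k * (1 - cc^2 * t)],
              vector [k * (t * lam^2 + lam * b + d), k * (- cc * (b + 2 * t * lam))]])"

definition mat_eigenvalue :: "complex^2^2 \<Rightarrow> complex \<Rightarrow> bool" where
  "mat_eigenvalue A \<mu> \<longleftrightarrow> (\<exists>v. v \<noteq> 0 \<and> A *v v = \<mu> *s v)"

definition gen_eigenspace :: "complex^2^2 \<Rightarrow> complex \<Rightarrow> (complex^2) set" where
  "gen_eigenspace A \<mu> = {v. \<exists>k. ((\<lambda>x. A *v x - \<mu> *s x) ^^ k) v = 0}"

definition stable_space :: "complex^2^2 \<Rightarrow> (complex^2) set" where
  "stable_space A = vec.span (\<Union>{gen_eigenspace A \<mu> | \<mu>. mat_eigenvalue A \<mu> \<and> Re \<mu> < 0})"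

definition unstable_space :: "complex^2^2 \<Rightarrow> (complex^2) set" where
  "unstable_space A = vec.span (\<Union>{gen_eigenspace A \<mu> | \<mu>. mat_eigenvalue A \<mu> \<and> Re \<mu> > 0})"

end

theory Submission
  imports Defs
begin

text \<open>
  Dividing by \<open>1 - c\<^sup>2\<tau> > 0\<close>, \<open>A\<^sup>\<tau>\<^sub>\<plusminus>(\<lambda>)\<close> is the companion matrix of \<open>\<mu>\<^sup>2 = q(\<lambda>) \<mu> + p(\<lambda>)\<close>, so
  everything reduces to showing that this quadratic has one root in each open half plane.
  Substituting \<open>w = \<lambda> - c\<mu>\<close> turns the equation into \<open>\<mu>\<^sup>2 = \<tau>w\<^sup>2 + (1 + \<tau>\<delta>) w + \<delta>\<close>, which has
  no purely imaginary root \<open>\<mu>\<close> as long as \<open>Re \<lambda> > -\<delta>/2\<close> and \<open>\<tau>\<delta> < 2\<close>. The product of the real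
  parts of the two roots is a continuous function of the coefficients (although the roots
  themselves are not); it is negative at \<open>\<lambda> = 0\<close>, where the roots are real with product
  \<open>-\<delta>/(1 - c\<^sup>2\<tau>)\<close>, and it cannot vanish on the segment from \<open>0\<close> to \<open>\<lambda>\<close>, so it is negative at \<open>\<lambda>\<close>.
\<close>

definition companion :: "complex \<Rightarrow> complex \<Rightarrow> complex^2^2" where
  "companion p q = vector [vector [0, 1], vector [p, q]]"

lemma companion_mult_vec: "companion p q *v w = vector [w$2, p * w$1 + q * w$2]"
  by (simp add: companion_def vec_eq_iff forall_2 matrix_vector_mult_def sum_2)

lemma vector_1_nonzero: "(vector [1, m] :: complex^2) \<noteq> 0"
  by (metis vector_2(1) zero_index one_neq_zero)

lemma companion_shift:
  fixes p q m1 m2 :: complex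
  assumes "m1 + m2 = q" "m1 * m2 = - p"
  shows "companion p q *v x - m1 *s x = (x$2 - m1 * x$1) *s vector [1, m2]"
proof -
  have "q - m1 = m2" "p = - m1 * m2" using assms by (auto simp: algebra_simps)
  then show ?thesis by (simp add: companion_mult_vec vec_eq_iff forall_2 algebra_simps)
qed

lemma companion_shift_funpow:
  fixes p q m1 m2 :: complex
  assumes "m1 + m2 = q" "m1 * m2 = - p"
  shows "((\<lambda>x. companion p q *v x - m1 *s x) ^^ Suc k) w
           = ((m2 - m1)^k * (w$2 - m1 * w$1)) *s vector [1, m2]"
proof (induction k)
  case 0
  then show ?case using companion_shift[OF assms] by simp
next
  case (Suc k)
  then show ?case
    by (simp only: funpow.simps comp_apply companion_shift[OF assms])
      (simp add: vec_eq_iff forall_2 algebra_simps)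
qed

lemma gen_eigenspace_companion:
  fixes p q m1 m2 :: complex
  assumes "m1 + m2 = q" "m1 * m2 = - p" "m1 \<noteq> m2"
  shows "gen_eigenspace (companion p q) m1 = vec.span {vector [1, m1]}"
proof -
  have "w \<in> gen_eigenspace (companion p q) m1 \<longleftrightarrow> w$2 = m1 * w$1" for w
  proof
    assume "w \<in> gen_eigenspace (companion p q) m1"
    then obtain k where k: "((\<lambda>x. companion p q *v x - m1 *s x) ^^ k) w = 0"
      by (auto simp: gen_eigenspace_def)
    show "w$2 = m1 * w$1"
    proof (cases k)
      case (Suc j)
      then have "((m2 - m1)^j * (w$2 - m1 * w$1)) *s (vector [1, m2] :: complex^2) = 0"
        using k companion_shift_funpow[OF assms(1,2), of j w] Suc by simp
      then have "(m2 - m1)^j * (w$2 - m1 * w$1) = 0"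
        using vector_1_nonzero by (metis vector_mul_eq_0)
      then show ?thesis using assms(3) by simp
    qed (use k in simp)
  next
    assume "w$2 = m1 * w$1"
    then have "((\<lambda>x. companion p q *v x - m1 *s x) ^^ Suc 0) w = 0"
      using companion_shift_funpow[OF assms(1,2), of 0 w] by simp
    then show "w \<in> gen_eigenspace (companion p q) m1"
      unfolding gen_eigenspace_def by blast
  qed
  moreover have "w \<in> vec.span {vector [1, m1]} \<longleftrightarrow> w$2 = m1 * w$1" for w :: "complex^2"
  proof
    assume "w$2 = m1 * w$1"
    then have "w = w$1 *s vector [1, m1]" by (simp add: vec_eq_iff forall_2)
    then show "w \<in> vec.span {vector [1, m1]}" by (auto simp: vec.span_singleton)
  qed (auto simp: vec.span_singleton)
  ultimately show ?thesis by blast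
qed

lemma mat_eigenvalue_companion_iff:
  fixes p q m1 m2 :: complex
  assumes "m1 + m2 = q" "m1 * m2 = - p"
  shows "mat_eigenvalue (companion p q) \<mu> \<longleftrightarrow> \<mu> = m1 \<or> \<mu> = m2"
proof -
  have factor: "\<mu> * \<mu> - q * \<mu> - p = (\<mu> - m1) * (\<mu> - m2)"
    using assms by (simp add: algebra_simps flip: assms(1))
  show ?thesis
  proof
    assume "mat_eigenvalue (companion p q) \<mu>"
    then obtain v where v: "v \<noteq> 0" "companion p q *v v = \<mu> *s v"
      by (auto simp: mat_eigenvalue_def)
    then have v2: "v$2 = \<mu> * v$1" and "p * v$1 + q * v$2 = \<mu> * v$2"
      by (auto simp: companion_mult_vec vec_eq_iff forall_2)
    then have "(\<mu> * \<mu> - q * \<mu> - p) * v$1 = 0" by (simp add: algebra_simps)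
    moreover have "v$1 \<noteq> 0" using v(1) v2 by (auto simp: vec_eq_iff forall_2)
    ultimately show "\<mu> = m1 \<or> \<mu> = m2" using factor by simp
  next
    assume "\<mu> = m1 \<or> \<mu> = m2"
    then have "\<mu> * \<mu> - q * \<mu> - p = 0" using factor by auto
    then have "companion p q *v vector [1, \<mu>] = \<mu> *s vector [1, \<mu>]"
      by (simp add: companion_mult_vec vec_eq_iff forall_2 algebra_simps)
    then show "mat_eigenvalue (companion p q) \<mu>"
      unfolding mat_eigenvalue_def using vector_1_nonzero by blast
  qed
qed

lemma companion_hyperbolic:
  fixes p q m1 m2 :: complex
  assumes "m1 + m2 = q" "m1 * m2 = - p" "Re m1 < 0" "0 < Re m2"
  shows "(\<forall>\<mu>. mat_eigenvalue (companion p q) \<mu> \<longrightarrow> Re \<mu> \<noteq> 0) \<and>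
         vec.dim (stable_space (companion p q)) = 1 \<and>
         vec.dim (unstable_space (companion p q)) = 1"
proof -
  have m12: "m1 \<noteq> m2" using assms(3,4) by auto
  note eig = mat_eigenvalue_companion_iff[OF assms(1,2)]
  have "{gen_eigenspace (companion p q) \<mu> | \<mu>. mat_eigenvalue (companion p q) \<mu> \<and> Re \<mu> < 0}
        = {vec.span {vector [1, m1]}}"
    using eig assms(3,4) gen_eigenspace_companion[OF assms(1,2) m12] by auto
  moreover have "{gen_eigenspace (companion p q) \<mu> | \<mu>. mat_eigenvalue (companion p q) \<mu> \<and> 0 < Re \<mu>}
        = {vec.span {vector [1, m2]}}"
    using eig assms gen_eigenspace_companion[of m2 m1 q p] m12 by (auto simp: ac_simps)
  ultimately show ?thesis
    unfolding stable_space_def unstable_space_def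
    using eig assms(3,4) vector_1_nonzero by (auto simp: vec.span_span vec.dim_span)
qed

text \<open>The product of the real parts of the roots of \<open>\<mu>\<^sup>2 = q\<mu> + p\<close>, written through the
  discriminant without choosing a square root, so that it is continuous in \<open>(p, q)\<close>.\<close>

definition re_root_product :: "complex \<Rightarrow> complex \<Rightarrow> real" where
  "re_root_product q p = ((Re q)^2 - (Re (q^2 + 4*p) + cmod (q^2 + 4*p)) / 2) / 4"

lemma Re_power2_eq: "(Re (s::complex))^2 = (Re (s^2) + cmod (s^2)) / 2"
proof -
  have "cmod (s^2) = (Re s)^2 + (Im s)^2" by (simp add: norm_power cmod_power2)
  then show ?thesis by (simp add: power2_eq_square algebra_simps)
qed

lemma re_root_product_eq:
  fixes p q m1 m2 :: complex
  assumes "m1 + m2 = q" "m1 * m2 = - p"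
  shows "Re m1 * Re m2 = re_root_product q p"
proof -
  have d: "(m1 - m2)^2 = q^2 + 4*p"
    using assms by (simp add: power2_eq_square algebra_simps flip: assms(1))
  have "Re m1 * Re m2 = ((Re q)^2 - (Re (m1 - m2))^2) / 4"
    using assms(1) by (auto simp: power2_eq_square algebra_simps)
  also have "\<dots> = re_root_product q p"
    by (simp only: Re_power2_eq[of "m1 - m2"] d re_root_product_def)
  finally show ?thesis .
qed

lemma quadratic_roots_exist: "\<exists>m1 m2 :: complex. m1 + m2 = q \<and> m1 * m2 = - p"
proof (intro exI conjI)
  let ?s = "csqrt (q^2 + 4*p)"
  show "(q + ?s)/2 + (q - ?s)/2 = q" by (simp add: field_simps)
  have "?s * ?s = q^2 + 4*p" by (metis power2_csqrt power2_eq_square)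
  then show "(q + ?s)/2 * ((q - ?s)/2) = - p" by (simp add: field_simps power2_eq_square)
qed

lemma re_root_product_of_real:
  fixes p q :: real
  assumes "0 \<le> q^2 + 4*p"
  shows "re_root_product (of_real q) (of_real p) = - p"
proof -
  have discriminant: "(of_real q)^2 + 4 * of_real p = (of_real (q^2 + 4*p) :: complex)" by simp
  show ?thesis
    using assms unfolding re_root_product_def discriminant norm_of_real Re_complex_of_real
    by (simp add: add_divide_distrib)
qed

lemma continuous_on_re_root_product:
  assumes "continuous_on S q" "continuous_on S p"
  shows "continuous_on S (\<lambda>t. re_root_product (q t) (p t))"
  unfolding re_root_product_def by (intro continuous_intros assms) auto

lemma quadratic_roots_opposite_signs:
  fixes p q :: complex
  assumes "re_root_product q p < 0"
  obtains m1 m2 where "m1 + m2 = q" "m1 * m2 = - p" "Re m1 < 0" "0 < Re m2"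
proof -
  obtain m1 m2 where m: "m1 + m2 = q" "m1 * m2 = - p"
    using quadratic_roots_exist by blast
  have "Re m1 * Re m2 < 0" using re_root_product_eq[OF m] assms by simp
  then consider "Re m1 < 0" "0 < Re m2" | "Re m2 < 0" "0 < Re m1"
    by (auto simp: mult_less_0_iff)
  then show ?thesis
  proof cases
    case 1
    then show ?thesis using that m by blast
  next
    case 2
    then show ?thesis using that[of m2 m1] m by (simp add: ac_simps)
  qed
qed

lemma re_root_product_neg_along_path:
  fixes p q :: "real \<Rightarrow> complex"
  assumes "continuous_on {0..1} q" "continuous_on {0..1} p"
    and no_imag: "\<And>t m. t \<in> {0..1} \<Longrightarrow> m^2 = q t * m + p t \<Longrightarrow> Re m \<noteq> 0"
    and start: "re_root_product (q 0) (p 0) < 0"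
  shows "re_root_product (q 1) (p 1) < 0"
proof (rule ccontr)
  assume "\<not> ?thesis"
  then obtain t where t: "t \<in> {0..1}" "re_root_product (q t) (p t) = 0"
    using IVT'[of "\<lambda>t. re_root_product (q t) (p t)" 0 0 1] start
      continuous_on_re_root_product[OF assms(1,2)] by auto
  obtain m1 m2 where m: "m1 + m2 = q t" "m1 * m2 = - p t"
    using quadratic_roots_exist by blast
  have pt: "p t = - (m1 * m2)" using m(2) by simp
  have "m^2 = q t * m + p t" if "m = m1 \<or> m = m2" for m
    using that by (auto simp: power2_eq_square algebra_simps pt simp flip: m(1))
  then have "Re m1 \<noteq> 0" "Re m2 \<noteq> 0" using no_imag[OF t(1)] by auto
  then show False using re_root_product_eq[OF m] t(2) by simp
qed

definition A21 :: "real \<Rightarrow> real \<Rightarrow> real \<Rightarrow> complex \<Rightarrow> complex" where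
  "A21 \<tau> c \<delta> lam = (of_real \<tau> * lam^2 + lam * of_real (1 + \<tau> * \<delta>) + of_real \<delta>) / of_real (1 - c^2 * \<tau>)"

definition A22 :: "real \<Rightarrow> real \<Rightarrow> real \<Rightarrow> complex \<Rightarrow> complex" where
  "A22 \<tau> c \<delta> lam = - of_real c * (of_real (1 + \<tau> * \<delta>) + 2 * of_real \<tau> * lam) / of_real (1 - c^2 * \<tau>)"

lemma of_real_sq_mult_neq_1:
  fixes c \<tau> :: real
  shows "c^2 * \<tau> \<noteq> 1 \<Longrightarrow> (complex_of_real c)^2 * of_real \<tau> \<noteq> 1"
  by (metis of_real_eq_1_iff of_real_mult of_real_power)

lemma A_mat_eq_companion:
  assumes "c^2 * \<tau> \<noteq> 1"
  shows "A_mat \<tau> c \<delta> lam = companion (A21 \<tau> c \<delta> lam) (A22 \<tau> c \<delta> lam)"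
  using of_real_sq_mult_neq_1[OF assms]
  unfolding A_mat_def companion_def A21_def A22_def Let_def by simp

lemma A_char_no_imaginary_root:
  fixes \<tau> c \<delta> :: real
  assumes root: "\<mu>^2 = A22 \<tau> c \<delta> lam * \<mu> + A21 \<tau> c \<delta> lam"
    and "c^2 * \<tau> \<noteq> 1" "0 < \<tau>" "0 < \<delta>" "\<tau> * \<delta> < 2" "- \<delta> / 2 < Re lam"
  shows "Re \<mu> \<noteq> 0"
proof
  assume re0: "Re \<mu> = 0"
  define b where "b = 1 + \<tau> * \<delta>"
  define x where "x = Re lam"
  define y where "y = Im \<mu>"
  define z where "z = Im lam - c * y"
  define a where "a = (of_real (1 - c^2 * \<tau>) :: complex)"
  have "a \<noteq> 0" unfolding a_def using of_real_sq_mult_neq_1[OF assms(2)] by simp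
  have "a * \<mu>^2 = (a * A22 \<tau> c \<delta> lam) * \<mu> + a * A21 \<tau> c \<delta> lam"
    by (simp only: root distrib_left mult.assoc)
  also have "\<dots> = - of_real c * (of_real b + 2 * of_real \<tau> * lam) * \<mu> + (of_real \<tau> * lam^2 + lam * of_real b + of_real \<delta>)"
    using \<open>a \<noteq> 0\<close> unfolding A21_def A22_def a_def b_def by simp
  finally have "a * \<mu>^2 = - of_real c * (of_real b + 2 * of_real \<tau> * lam) * \<mu> + (of_real \<tau> * lam^2 + lam * of_real b + of_real \<delta>)" .
  \<comment> \<open>with \<open>w = \<lambda> - c\<mu>\<close> this reads \<open>\<mu>\<^sup>2 = \<tau>w\<^sup>2 + bw + \<delta>\<close>\<close>
  then have "\<mu>^2 = of_real \<tau> * (lam - of_real c * \<mu>)^2 + of_real b * (lam - of_real c * \<mu>) + of_real \<delta>"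
    unfolding a_def by (simp add: algebra_simps power2_eq_square)
  moreover have "\<mu> = Complex 0 y" "lam - of_real c * \<mu> = Complex x z"
    using re0 unfolding x_def y_def z_def by (simp_all add: complex_eq_iff)
  ultimately have "Complex (-(y^2)) 0 = of_real \<tau> * (Complex x z)^2 + of_real b * Complex x z + of_real \<delta>"
    by (simp add: power2_eq_square complex_eq_iff)
  then have re: "-(y^2) = \<tau> * (x^2 - z^2) + b * x + \<delta>" and im: "(2 * \<tau> * x + b) * z = 0"
    by (simp_all add: complex_eq_iff power2_eq_square algebra_simps)
  have x: "- \<delta> / 2 < x" using assms(6) x_def by simp
  have "0 < \<tau> * (2 * x + \<delta>)" using x assms(3) by simp
  then have "0 < 2 * \<tau> * x + b" unfolding b_def by (simp add: algebra_simps)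
  then have "z = 0" using im by simp
  have "\<tau> * (- \<delta> / 2) < \<tau> * x" using x assms(3) by (intro mult_strict_left_mono)
  then have "0 < (\<tau> * x + 1) * (x + \<delta>)" using assms(4,5) x by (intro mult_pos_pos) auto
  then have "0 < \<tau> * x^2 + b * x + \<delta>" unfolding b_def by (simp add: algebra_simps power2_eq_square)
  moreover have "-(y^2) = \<tau> * x^2 + b * x + \<delta>" using re \<open>z = 0\<close> by simp
  ultimately show False using zero_le_power2[of y] by linarith
qed

lemma A_mat_hyperbolic:
  fixes \<tau> c \<delta> :: real
  assumes "0 < \<tau>" "0 < \<delta>" "\<tau> * \<delta> < 2" "c^2 * \<tau> < 1" "- \<delta> / 2 < Re lam"
  shows "(\<forall>\<mu>. mat_eigenvalue (A_mat \<tau> c \<delta> lam) \<mu> \<longrightarrow> Re \<mu> \<noteq> 0) \<and>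
         vec.dim (stable_space (A_mat \<tau> c \<delta> lam)) = 1 \<and>
         vec.dim (unstable_space (A_mat \<tau> c \<delta> lam)) = 1"
proof -
  define a where "a = 1 - c^2 * \<tau>"
  have a: "0 < a" "c^2 * \<tau> \<noteq> 1" using assms(4) a_def by auto
  let ?q = "\<lambda>t::real. A22 \<tau> c \<delta> (of_real t * lam)"
  let ?p = "\<lambda>t::real. A21 \<tau> c \<delta> (of_real t * lam)"
  have "re_root_product (?q 1) (?p 1) < 0"
  proof (rule re_root_product_neg_along_path)
    show "continuous_on {0..1} ?q" "continuous_on {0..1} ?p"
      unfolding A21_def A22_def using of_real_sq_mult_neq_1[OF a(2)]
      by (intro continuous_intros; simp)+
    show "Re m \<noteq> 0" if "t \<in> {0..1}" "m^2 = ?q t * m + ?p t" for t m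
    proof (rule A_char_no_imaginary_root[OF that(2) a(2) assms(1-3)])
      have "min 0 (Re lam) \<le> t * Re lam"
        using that(1) by (cases "0 \<le> Re lam") (auto intro: mult_right_mono_neg)
      then show "- \<delta> / 2 < Re (of_real t * lam)" using assms(2,5) by simp
    qed
    have "?q 0 = of_real (- c * (1 + \<tau> * \<delta>) / a)" "?p 0 = of_real (\<delta> / a)"
      unfolding A21_def A22_def a_def by simp_all
    moreover have "0 \<le> (- c * (1 + \<tau> * \<delta>) / a)^2 + 4 * (\<delta> / a)"
      using a assms(2) by (simp add: add_nonneg_nonneg)
    ultimately have "re_root_product (?q 0) (?p 0) = - (\<delta> / a)"
      by (simp only: re_root_product_of_real)
    then show "re_root_product (?q 0) (?p 0) < 0" using a assms(2) by simp
  qed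
  then obtain m1 m2 where "m1 + m2 = ?q 1" "m1 * m2 = - ?p 1" "Re m1 < 0" "0 < Re m2"
    by (rule quadratic_roots_opposite_signs)
  then show ?thesis
    using companion_hyperbolic A_mat_eq_companion[OF a(2)] by simp
qed

lemma smooth_fun_continuous_deriv:
  assumes "smooth_fun f"
  shows "continuous_on S (deriv f)"
proof -
  have "deriv f differentiable (at x)" for x
    using assms[unfolded smooth_fun_def, rule_format, of 1] by simp
  then show ?thesis
    by (simp add: continuous_at_imp_continuous_on differentiable_imp_continuous_within)
qed

lemma tau_m_bound:
  assumes "smooth_fun f" "0 < \<tau>" "\<tau> < tau_m f" "x \<in> {0..1}"
  shows "\<tau> * \<bar>deriv f x\<bar> < 1"
proof -
  define S where "S = (SUP x\<in>{0..1}. \<bar>deriv f x\<bar>)"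
  have "continuous_on {0..1} (\<lambda>x. \<bar>deriv f x\<bar>)"
    using smooth_fun_continuous_deriv[OF assms(1)] by (intro continuous_intros)
  then have "bdd_above ((\<lambda>x. \<bar>deriv f x\<bar>) ` {0..1})"
    by (intro bounded_imp_bdd_above compact_imp_bounded compact_continuous_image) auto
  then have "\<bar>deriv f x\<bar> \<le> S" unfolding S_def using assms(4) by (rule cSUP_upper2) simp
  moreover have "\<tau> < 1 / S" using assms(3) unfolding tau_m_def S_def .
  moreover from this have "0 < S" using assms(2) zero_less_divide_1_iff[of S] by linarith
  ultimately have "\<tau> * \<bar>deriv f x\<bar> \<le> \<tau> * S" "\<tau> * S < 1"
    using assms(2) by (simp_all add: less_divide_eq)
  then show ?thesis by linarith
qed

theorem lemma3p13:
  fixes f :: "real \<Rightarrow> real" and \<tau> c :: real and U V :: "real \<Rightarrow> real" and lam :: complex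
  assumes "smooth_fun f" and "bistable f"
    and "0 < \<tau>" and "\<tau> < tau_m f"
    and "traveling_wave f \<tau> c U V"
    and "c^2 * \<tau> < 1"
    and "Re lam > - chi0 f"
  shows "\<forall>\<delta> \<in> {- deriv f 1, - deriv f 0}.
           (\<forall>\<mu>. mat_eigenvalue (A_mat \<tau> c \<delta> lam) \<mu> \<longrightarrow> Re \<mu> \<noteq> 0) \<and>
           vec.dim (stable_space (A_mat \<tau> c \<delta> lam)) = 1 \<and>
           vec.dim (unstable_space (A_mat \<tau> c \<delta> lam)) = 1"
proof
  fix \<delta> assume \<delta>: "\<delta> \<in> {- deriv f 1, - deriv f 0}"
  have "deriv f 0 < 0" "deriv f 1 < 0" using assms(2) unfolding bistable_def by auto
  then have "0 < \<delta>" "\<delta> = \<bar>deriv f 1\<bar> \<or> \<delta> = \<bar>deriv f 0\<bar>" using \<delta> by auto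
  then have "\<tau> * \<delta> < 1" using tau_m_bound[OF assms(1,3,4)] by auto
  moreover have "- \<delta> / 2 < Re lam" using assms(7) \<delta> unfolding chi0_def by auto
  ultimately show "(\<forall>\<mu>. mat_eigenvalue (A_mat \<tau> c \<delta> lam) \<mu> \<longrightarrow> Re \<mu> \<noteq> 0) \<and>
           vec.dim (stable_space (A_mat \<tau> c \<delta> lam)) = 1 \<and>
           vec.dim (unstable_space (A_mat \<tau> c \<delta> lam)) = 1"
    using A_mat_hyperbolic[OF assms(3) \<open>0 < \<delta>\<close> _ assms(6)] by simp
qed

end
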